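(* Let $p_0$ be a probability density on $[0,\infty)$ with $\int_0^\infty x\,p_0(x)\,dx=w$, and suppose that for some $\alpha>1$, $\int_0^\infty x^\alpha p_0(x)\,dx<\infty$. Define $p_{t+1}=T[p_t]$ for $t=0,1,2,\dots$. Then for all $x\ge 0$, $$\lim_{t\to\infty}\int_0^x p_t(u)\,du=\int_0^x p_w(u)\,du,\qquad\text{where } p_w(u)=\frac{4}{w^2}\,u\,e^{-\frac{2}{w}u}.$$
   Context: For a probability density $p$ on $[0,\infty)$ define $S[p](x)=\int_x^\infty \frac{p(u)}{u}\,du$ for $x\ge 0$, and $T[p](x)=(S[p]*S[p])(x)=\int_0^x S[p](x-v)\,S[p](v)\,dv$. *)

theory Defs
  imports "HOL-Analysis.Analysis"
begin

definition S_op :: "(real \<Rightarrow> real) \<Rightarrow> real \<Rightarrow> real" where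
  "S_op p x = (LBINT u:{x<..}. p u / u)"

definition T_op :: "(real \<Rightarrow> real) \<Rightarrow> real \<Rightarrow> real" where
  "T_op p x = (LBINT v:{0..x}. S_op p (x - v) * S_op p v)"

end

theory Submission
  imports Defs "HOL-Probability.Probability"
begin

text \<open>
  If \<open>X\<close> has density \<open>p\<close> on \<open>[0,\<infinity>)\<close> and \<open>V\<close> is uniform on \<open>[0,1]\<close> and independent
  of \<open>X\<close>, then \<open>V X\<close> has density \<open>S[p]\<close>. Hence \<open>T[p]\<close> is the law of \<open>V\<^sub>1 X\<^sub>1 + V\<^sub>2 X\<^sub>2\<close>,
  and its characteristic function at \<open>t\<close> is the square of the average of \<open>\<phi>\<^sub>p(t v)\<close>
  over \<open>v \<in> [0,1]\<close>. The density \<open>p\<^sub>w\<close> (Erlang of shape 2 and rate \<open>2/w\<close>) is a fixed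
  point: \<open>S[p\<^sub>w]\<close> is the exponential density of rate \<open>2/w\<close>, whose self-convolution is \<open>p\<^sub>w\<close>.
  Since \<open>p\<^sub>0\<close> and \<open>p\<^sub>w\<close> have the same mean, a first-order Taylor expansion gives
  \<open>|\<phi>\<^sub>p\<^sub>0(t) - \<phi>\<^sub>p\<^sub>w(t)| \<le> C |t|\<^sup>\<beta>\<close> with \<open>\<beta> = min \<alpha> 2 > 1\<close>, and one application
  of \<open>T\<close> multiplies \<open>C\<close> by \<open>2/(\<beta>+1) < 1\<close>. So the characteristic functions converge
  pointwise, and Levy's continuity theorem gives convergence of the distribution
  functions, the limit being continuous.
\<close>

abbreviation law :: "(real \<Rightarrow> real) \<Rightarrow> real measure" where
  "law p \<equiv> density lborel (\<lambda>x. ennreal (p x))"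

definition halfline_pdf :: "(real \<Rightarrow> real) \<Rightarrow> bool" where
  "halfline_pdf p \<longleftrightarrow>
     p \<in> borel_measurable borel \<and> (\<forall>x. 0 \<le> p x) \<and> (\<forall>x<0. p x = 0) \<and> prob_space (law p)"

text \<open>\<open>S_op p 0\<close> is in general a divergent integral, so \<open>S[p]\<close> is taken to vanish off \<open>(0,\<infinity>)\<close>.\<close>
definition S_pos :: "(real \<Rightarrow> real) \<Rightarrow> real \<Rightarrow> real" where
  "S_pos p x = (if 0 < x then S_op p x else 0)"

definition unif01 :: "real measure" where
  "unif01 = density lborel (indicator {0..1::real})"

lemma halfline_pdfD:
  assumes "halfline_pdf p"
  shows "p \<in> borel_measurable borel" "\<And>x. 0 \<le> p x" "\<And>x. x < 0 \<Longrightarrow> p x = 0"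
    "prob_space (law p)"
  using assms by (auto simp: halfline_pdf_def)

lemma real_distribution_law: "halfline_pdf p \<Longrightarrow> real_distribution (law p)"
proof -
  assume "halfline_pdf p"
  then interpret prob_space "law p" using halfline_pdfD(4) by blast
  show ?thesis by unfold_locales simp
qed

lemma nn_integral_halfline_pdf: "halfline_pdf p \<Longrightarrow> (\<integral>\<^sup>+x. ennreal (p x) \<partial>lborel) = 1"
proof -
  assume p: "halfline_pdf p"
  then interpret prob_space "law p" by (simp add: halfline_pdf_def)
  have [measurable]: "p \<in> borel_measurable borel" using p by (simp add: halfline_pdf_def)
  show ?thesis using emeasure_space_1 by (simp add: emeasure_density)
qed

lemma integrable_law_iff:
  assumes "halfline_pdf p" and [measurable]: "f \<in> borel_measurable borel"
  shows "integrable (law p) f \<longleftrightarrow> integrable lborel (\<lambda>x. p x * f x)"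
  using halfline_pdfD[OF assms(1)] by (subst integrable_density) auto

lemma integral_law:
  assumes "halfline_pdf p" and [measurable]: "f \<in> borel_measurable borel"
  shows "(\<integral>x. f x \<partial>law p) = (\<integral>x. p x * f x \<partial>lborel)"
  using halfline_pdfD[OF assms(1)] by (subst integral_density) auto

lemma cdf_law:
  assumes "halfline_pdf p"
  shows "cdf (law p) x = (LBINT u:{0..x}. p u)"
proof -
  have [measurable]: "p \<in> borel_measurable borel" and nn: "\<And>x. 0 \<le> p x"
    and neg: "\<And>x. x < 0 \<Longrightarrow> p x = 0"
    using halfline_pdfD[OF assms] by auto
  have "cdf (law p) x = enn2real (emeasure (law p) {..x})"
    by (simp add: cdf_def measure_def)
  also have "\<dots> = enn2real (\<integral>\<^sup>+u. ennreal (indicator {0..x} u * p u) \<partial>lborel)"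
    by (subst emeasure_density)
       (auto intro!: arg_cong[where f=enn2real] nn_integral_cong simp: indicator_def neg)
  also have "\<dots> = (LBINT u:{0..x}. p u)"
    unfolding set_lebesgue_integral_def by (subst integral_eq_nn_integral) (auto simp: nn)
  finally show ?thesis .
qed

lemma isCont_cdf_law:
  assumes "halfline_pdf p"
  shows "isCont (cdf (law p)) x"
proof -
  have [measurable]: "p \<in> borel_measurable borel" using halfline_pdfD[OF assms] by auto
  have "emeasure (law p) {x} = (\<integral>\<^sup>+u. ennreal (p u) * indicator {x} u \<partial>lborel)"
    by (subst emeasure_density) auto
  also have "\<dots> = 0"
  proof (rule nn_integral_zero')
    show "AE u in lborel. ennreal (p u) * indicator {x} u = 0"
      using AE_lborel_singleton[of x] by eventually_elim simp
  qed
  finally have "emeasure (law p) {x} = 0" .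
  interpret real_distribution "law p" using real_distribution_law[OF assms] .
  show ?thesis unfolding isCont_cdf using \<open>emeasure (law p) {x} = 0\<close> by (simp add: measure_def)
qed

lemma S_op_eq_integral: "S_op p x = (\<integral>u. (if x < u then p u / u else 0) \<partial>lborel)"
  unfolding S_op_def set_lebesgue_integral_def
  by (intro Bochner_Integration.integral_cong) (auto simp: indicator_def)

lemma borel_measurable_S_op[measurable]:
  assumes [measurable]: "p \<in> borel_measurable borel"
  shows "S_op p \<in> borel_measurable borel"
proof -
  have "(\<lambda>z::real\<times>real. (if fst z < snd z then p (snd z) / snd z else 0))
          \<in> borel_measurable (borel \<Otimes>\<^sub>M lborel)"
    by measurable
  then show ?thesis
    unfolding S_op_eq_integral[abs_def]
    by (intro lborel.borel_measurable_lebesgue_integral) (simp add: case_prod_beta')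
qed

lemma borel_measurable_S_pos[measurable]:
  assumes [measurable]: "p \<in> borel_measurable borel"
  shows "S_pos p \<in> borel_measurable borel"
  unfolding S_pos_def[abs_def] by measurable

lemma S_op_nonneg: "(\<And>x. 0 \<le> p x) \<Longrightarrow> 0 \<le> x \<Longrightarrow> 0 \<le> S_op p x"
  unfolding S_op_eq_integral by (intro integral_nonneg_AE AE_I2) (auto intro: divide_nonneg_pos)

lemma S_pos_nonneg: "(\<And>x. 0 \<le> p x) \<Longrightarrow> 0 \<le> S_pos p x"
  unfolding S_pos_def using S_op_nonneg[of p x] by auto

lemma S_op_cong:
  assumes "\<And>u. 0 < u \<Longrightarrow> p u = q u" and "0 \<le> y"
  shows "S_op p y = S_op q y"
  unfolding S_op_eq_integral using assms by (intro Bochner_Integration.integral_cong) auto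

lemma T_op_cong:
  assumes "\<And>u. 0 < u \<Longrightarrow> p u = q u"
  shows "T_op p = T_op q"
proof
  fix z
  have "S_op p (z - v) * S_op p v = S_op q (z - v) * S_op q v" if "v \<in> {0..z}" for v
    using that by (simp add: S_op_cong[OF assms])
  then show "T_op p z = T_op q z"
    unfolding T_op_def set_lebesgue_integral_def
    by (intro Bochner_Integration.integral_cong refl) (simp add: indicator_def)
qed

lemma ennreal_S_op_eq_nn_integral:
  assumes p: "halfline_pdf p" and x: "0 < x"
  shows "ennreal (S_op p x) = (\<integral>\<^sup>+u. ennreal (if x < u then p u / u else 0) \<partial>lborel)"
proof -
  have [measurable]: "p \<in> borel_measurable borel" and nn: "\<And>x. 0 \<le> p x"
    using halfline_pdfD[OF p] by auto
  have "(\<integral>\<^sup>+u. ennreal (if x < u then p u / u else 0) \<partial>lborel)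
          \<le> (\<integral>\<^sup>+u. ennreal (1/x) * ennreal (p u) \<partial>lborel)"
  proof (intro nn_integral_mono)
    fix u
    have "p u / u \<le> p u / x" if "x < u" using that x nn[of u] by (intro divide_left_mono) auto
    then show "ennreal (if x < u then p u / u else 0) \<le> ennreal (1/x) * ennreal (p u)"
      using x nn[of u] by (auto simp: ennreal_mult[symmetric])
  qed
  also have "\<dots> = ennreal (1/x)" by (simp add: nn_integral_cmult nn_integral_halfline_pdf[OF p])
  also have "\<dots> < \<infinity>" by simp
  finally have "(\<integral>\<^sup>+u. ennreal (if x < u then p u / u else 0) \<partial>lborel) < \<infinity>" .
  moreover have "S_op p x = enn2real (\<integral>\<^sup>+u. ennreal (if x < u then p u / u else 0) \<partial>lborel)"
    unfolding S_op_eq_integral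
    by (rule integral_eq_nn_integral) (use nn x in \<open>auto intro!: AE_I2 divide_nonneg_pos\<close>)
  ultimately show ?thesis by simp
qed

lemma prob_space_unif01: "prob_space unif01"
  unfolding unif01_def by (intro prob_spaceI) (simp add: emeasure_density)

lemma sets_unif01[simp]: "sets unif01 = sets borel"
  by (simp add: unif01_def)

lemma unif01_abs_powr_moment:
  assumes b: "0 \<le> b"
  shows "integrable unif01 (\<lambda>v. \<bar>v\<bar> powr b)" "(\<integral>v. \<bar>v\<bar> powr b \<partial>unif01) = 1 / (b + 1)"
proof -
  have "((\<lambda>v. v powr b) has_integral (1 / (b+1))) {0..1::real}"
    using has_integral_powr_from_0[of b 1] b by simp
  then have "((\<lambda>v. \<bar>v\<bar> powr b) has_integral (1 / (b+1))) {0..1::real}"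
    by (rule has_integral_eq[rotated]) simp
  then have "(\<integral>\<^sup>+v. ennreal (indicator {0..1} v * \<bar>v\<bar> powr b) \<partial>lborel) = ennreal (1 / (b+1))"
    by (rule nn_integral_has_integral_lebesgue[rotated]) simp
  then have "(\<integral>\<^sup>+v. ennreal (\<bar>v\<bar> powr b) \<partial>unif01) = ennreal (1 / (b+1))"
    unfolding unif01_def
    by (subst nn_integral_density)
       (auto simp: ennreal_mult' indicator_def intro!: nn_integral_cong elim: back_subst[where P="\<lambda>z. z = _"])
  then have h: "has_bochner_integral unif01 (\<lambda>v. \<bar>v\<bar> powr b) (1 / (b+1))"
    by (intro has_bochner_integral_nn_integral) (use b in \<open>auto simp: unif01_def\<close>)
  show "integrable unif01 (\<lambda>v. \<bar>v\<bar> powr b)" using h by (rule integrable.intros)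
  show "(\<integral>v. \<bar>v\<bar> powr b \<partial>unif01) = 1 / (b + 1)" using h by (rule has_bochner_integral_integral_eq)
qed

lemma nn_integral_uniform_scale:
  fixes u c :: real
  assumes u: "0 < u" and c: "0 \<le> c" and [measurable]: "A \<in> sets borel"
  shows "(\<integral>\<^sup>+x. ennreal (if 0 < x \<and> x < u then c / u else 0) * indicator A x \<partial>lborel)
       = (\<integral>\<^sup>+v. indicator {0..1} v * (ennreal c * indicator A (v * u)) \<partial>lborel)"
proof -
  define F where "F x = ennreal (if 0 < x \<and> x < u then c / u else 0) * indicator A x" for x
  have "(\<integral>\<^sup>+x. F x \<partial>lborel) = ennreal \<bar>u\<bar> * (\<integral>\<^sup>+v. F (0 + u * v) \<partial>lborel)"
    using u by (intro nn_integral_real_affine) (auto simp: F_def)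
  also have "\<dots> = (\<integral>\<^sup>+v. ennreal u * F (u * v) \<partial>lborel)"
    using u by (subst nn_integral_cmult) (auto simp: F_def)
  also have "\<dots> = (\<integral>\<^sup>+v. indicator {0..1} v * (ennreal c * indicator A (v * u)) \<partial>lborel)"
  proof (intro nn_integral_cong_AE)
    have "AE v in lborel. v \<noteq> 0" "AE v in lborel. v \<noteq> 1" by (rule AE_lborel_singleton)+
    then show "AE v in lborel. ennreal u * F (u * v)
                 = indicator {0..1} v * (ennreal c * indicator A (v * u))"
    proof eventually_elim
      fix v :: real assume v: "v \<noteq> 0" "v \<noteq> 1"
      show "ennreal u * F (u * v) = indicator {0..1} v * (ennreal c * indicator A (v * u))"
      proof (cases "0 < v \<and> v < 1")
        case True
        then have "0 < u * v \<and> u * v < u" using u by simp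
        moreover have "ennreal u * ennreal (c / u) = ennreal c"
          using u c by (simp add: ennreal_mult[symmetric])
        ultimately show ?thesis
          using True by (simp add: F_def mult.assoc[symmetric] mult.commute[of v u])
      next
        case False
        then have "\<not> (0 < u * v \<and> u * v < u)" using u
          by (auto simp: zero_less_mult_iff mult_less_cancel_left1)
        moreover have "v \<notin> {0..1}" using False v by auto
        ultimately show ?thesis unfolding F_def by auto
      qed
    qed
  qed
  finally show ?thesis unfolding F_def .
qed

lemma ennreal_S_pos_eq_nn_integral:
  assumes p: "halfline_pdf p"
  shows "ennreal (S_pos p x) = (\<integral>\<^sup>+u. ennreal (if 0 < x \<and> x < u then p u / u else 0) \<partial>lborel)"
proof (cases "0 < x")
  case True
  then show ?thesis by (simp add: S_pos_def ennreal_S_op_eq_nn_integral[OF p])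
qed (simp add: S_pos_def)

lemma emeasure_distr_mult_unif01:
  assumes M: "prob_space M" "sets M = sets borel" and [measurable]: "A \<in> sets borel"
  shows "emeasure (distr (unif01 \<Otimes>\<^sub>M M) borel (\<lambda>(v,u). v * u)) A
       = (\<integral>\<^sup>+v. (\<integral>\<^sup>+u. indicator A (v * u) \<partial>M) \<partial>unif01)"
proof -
  interpret P: prob_space M by (rule M(1))
  interpret UP: prob_space unif01 by (rule prob_space_unif01)
  interpret PP: pair_prob_space unif01 M ..
  have sets: "sets (unif01 \<Otimes>\<^sub>M M) = sets (borel \<Otimes>\<^sub>M borel)"
    using M(2) by (intro sets_pair_measure_cong) auto
  have mult_meas: "(\<lambda>(v,u). v * u :: real) \<in> measurable (unif01 \<Otimes>\<^sub>M M) borel"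
    unfolding measurable_cong_sets[OF sets refl] by measurable
  have "emeasure (distr (unif01 \<Otimes>\<^sub>M M) borel (\<lambda>(v,u). v * u)) A
      = (\<integral>\<^sup>+z. indicator ((\<lambda>(v,u). v * u) -` A \<inter> space (unif01 \<Otimes>\<^sub>M M)) z \<partial>(unif01 \<Otimes>\<^sub>M M))"
    by (subst emeasure_distr[OF mult_meas], simp, rule nn_integral_indicator[symmetric])
       (rule measurable_sets[OF mult_meas], simp)
  also have "\<dots> = (\<integral>\<^sup>+z. indicator A ((\<lambda>(v,u). v * u) z) \<partial>(unif01 \<Otimes>\<^sub>M M))"
    by (intro nn_integral_cong) (auto simp: indicator_def)
  also have "\<dots> = (\<integral>\<^sup>+v. (\<integral>\<^sup>+u. indicator A (v * u) \<partial>M) \<partial>unif01)"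
  proof -
    have "(\<lambda>z::real\<times>real. indicator A (fst z * snd z) :: ennreal) \<in> borel_measurable (unif01 \<Otimes>\<^sub>M M)"
      unfolding measurable_cong_sets[OF sets refl] by measurable
    then show ?thesis by (subst P.nn_integral_fst[symmetric]) (auto simp: case_prod_beta')
  qed
  finally show ?thesis .
qed

lemma law_S_pos_eq_distr_mult:
  assumes p: "halfline_pdf p"
  shows "law (S_pos p) = distr (unif01 \<Otimes>\<^sub>M law p) borel (\<lambda>(v,u). v * u)"
proof (rule measure_eqI)
  have [measurable]: "p \<in> borel_measurable borel" and nn: "\<And>x. 0 \<le> p x"
    and neg: "\<And>x. x < 0 \<Longrightarrow> p x = 0"
    using halfline_pdfD[OF p] by auto
  show "sets (law (S_pos p)) = sets (distr (unif01 \<Otimes>\<^sub>M law p) borel (\<lambda>(v,u). v * u))"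
    by simp
  fix A assume "A \<in> sets (law (S_pos p))"
  then have [measurable]: "A \<in> sets borel" by simp
  define F where "F x u = ennreal (if 0 < x \<and> x < u then p u / u else 0) * indicator A x"
    for x u :: real
  have [measurable]: "(\<lambda>(x, u). F x u) \<in> borel_measurable (lborel \<Otimes>\<^sub>M lborel)"
    unfolding F_def by measurable
  have subst: "(\<integral>\<^sup>+x. F x u \<partial>lborel)
      = (\<integral>\<^sup>+v. indicator {0..1} v * (ennreal (p u) * indicator A (v * u)) \<partial>lborel)"
    if "0 < u" for u
    unfolding F_def by (rule nn_integral_uniform_scale[OF that nn]) measurable
  have "emeasure (law (S_pos p)) A = (\<integral>\<^sup>+x. ennreal (S_pos p x) * indicator A x \<partial>lborel)"
    by (simp add: emeasure_density)
  also have "\<dots> = (\<integral>\<^sup>+x. (\<integral>\<^sup>+u. F x u \<partial>lborel) \<partial>lborel)"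
    unfolding F_def ennreal_S_pos_eq_nn_integral[OF p]
    by (intro nn_integral_cong nn_integral_multc[symmetric]) measurable
  also have "\<dots> = (\<integral>\<^sup>+u. (\<integral>\<^sup>+x. F x u \<partial>lborel) \<partial>lborel)"
    by (rule lborel_pair.Fubini'[symmetric]) measurable
  also have "\<dots> = (\<integral>\<^sup>+u. (\<integral>\<^sup>+v. indicator {0..1} v * (ennreal (p u) * indicator A (v * u))
                            \<partial>lborel) \<partial>lborel)"
  proof (intro nn_integral_cong_AE)
    show "AE u in lborel. (\<integral>\<^sup>+x. F x u \<partial>lborel)
            = (\<integral>\<^sup>+v. indicator {0..1} v * (ennreal (p u) * indicator A (v * u)) \<partial>lborel)"
      using AE_lborel_singleton[of 0]
    proof eventually_elim
      fix u :: real assume "u \<noteq> 0"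
      then consider "u < 0" | "0 < u" by linarith
      then show "(\<integral>\<^sup>+x. F x u \<partial>lborel)
          = (\<integral>\<^sup>+v. indicator {0..1} v * (ennreal (p u) * indicator A (v * u)) \<partial>lborel)"
      proof cases
        case 1
        then have "\<And>x. F x u = 0" by (auto simp: F_def)
        with 1 show ?thesis by (simp add: neg)
      qed (rule subst)
    qed
  qed
  also have "\<dots> = (\<integral>\<^sup>+v. indicator {0..1} v * (\<integral>\<^sup>+u. ennreal (p u) * indicator A (v * u)
                     \<partial>lborel) \<partial>lborel)"
    by (subst lborel_pair.Fubini') (measurable, intro nn_integral_cong nn_integral_cmult, measurable)
  also have "\<dots> = (\<integral>\<^sup>+v. (\<integral>\<^sup>+u. indicator A (v * u) \<partial>law p) \<partial>unif01)"
    unfolding unif01_def by (simp add: nn_integral_density)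
  also have "\<dots> = emeasure (distr (unif01 \<Otimes>\<^sub>M law p) borel (\<lambda>(v,u). v * u)) A"
    using halfline_pdfD(4)[OF p] by (intro emeasure_distr_mult_unif01[symmetric]) simp_all
  finally show "emeasure (law (S_pos p)) A
      = emeasure (distr (unif01 \<Otimes>\<^sub>M law p) borel (\<lambda>(v,u). v * u)) A" .
qed

lemma halfline_pdf_S_pos:
  assumes p: "halfline_pdf p"
  shows "halfline_pdf (S_pos p)"
proof -
  have [measurable]: "p \<in> borel_measurable borel" and nn: "\<And>x. 0 \<le> p x"
    using halfline_pdfD[OF p] by auto
  interpret P: prob_space "law p" using halfline_pdfD[OF p] by auto
  interpret UP: prob_space unif01 by (rule prob_space_unif01)
  interpret PP: pair_prob_space unif01 "law p" ..
  have sets: "sets (unif01 \<Otimes>\<^sub>M law p) = sets (borel \<Otimes>\<^sub>M borel)"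
    by (intro sets_pair_measure_cong) auto
  have "(\<lambda>(v,u). v * u :: real) \<in> measurable (unif01 \<Otimes>\<^sub>M law p) borel"
    unfolding measurable_cong_sets[OF sets refl] by measurable
  then have "prob_space (distr (unif01 \<Otimes>\<^sub>M law p) borel (\<lambda>(v,u). v * u))"
    by (rule PP.prob_space_distr)
  then show ?thesis
    unfolding halfline_pdf_def law_S_pos_eq_distr_mult[OF p, symmetric]
    using S_op_nonneg[of p, OF nn] by (auto simp: S_pos_nonneg nn S_pos_def)
qed

lemma char_law_S_pos:
  assumes p: "halfline_pdf p"
  shows "char (law (S_pos p)) t = (\<integral>v. char (law p) (t * v) \<partial>unif01)"
proof -
  have [measurable]: "p \<in> borel_measurable borel" using halfline_pdfD[OF p] by auto
  interpret P: prob_space "law p" using halfline_pdfD[OF p] by auto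
  interpret UP: prob_space unif01 by (rule prob_space_unif01)
  interpret PP: pair_prob_space unif01 "law p" ..
  have sets: "sets (unif01 \<Otimes>\<^sub>M law p) = sets (borel \<Otimes>\<^sub>M borel)"
    by (intro sets_pair_measure_cong) auto
  have mult_meas: "(\<lambda>(v,u). v * u :: real) \<in> measurable (unif01 \<Otimes>\<^sub>M law p) borel"
    unfolding measurable_cong_sets[OF sets refl] by measurable
  have "(\<lambda>z::real\<times>real. iexp (t * (fst z * snd z))) \<in> borel_measurable (unif01 \<Otimes>\<^sub>M law p)"
    unfolding measurable_cong_sets[OF sets refl] by measurable
  then have int: "integrable (unif01 \<Otimes>\<^sub>M law p) (\<lambda>z::real\<times>real. iexp (t * (fst z * snd z)))"
    by (intro PP.integrable_const_bound[where B=1] AE_I2) (simp_all del: of_real_mult)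
  have "char (law (S_pos p)) t = char (distr (unif01 \<Otimes>\<^sub>M law p) borel (\<lambda>(v,u). v * u)) t"
    by (simp add: law_S_pos_eq_distr_mult[OF p])
  also have "\<dots> = (\<integral>z. iexp (t * (fst z * snd z)) \<partial>(unif01 \<Otimes>\<^sub>M law p))"
    unfolding char_def by (subst integral_distr[OF mult_meas]) (auto simp: case_prod_beta')
  also have "\<dots> = (\<integral>v. (\<integral>u. iexp (t * (v * u)) \<partial>law p) \<partial>unif01)"
    using PP.integral_fst'[OF int] by simp
  finally show ?thesis unfolding char_def by (simp add: mult.assoc)
qed

lemma char_convolution:
  assumes A: "real_distribution A" and B: "real_distribution B"
  shows "char (A \<star> B) t = char A t * char B t"
proof -
  interpret A: real_distribution A by fact
  interpret B: real_distribution B by fact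
  interpret AB: pair_prob_space A B ..
  have sets: "sets (A \<Otimes>\<^sub>M B) = sets (borel \<Otimes>\<^sub>M borel)"
    by (intro sets_pair_measure_cong) auto
  have add_meas: "(\<lambda>(x,y). x + y :: real) \<in> measurable (A \<Otimes>\<^sub>M B) borel"
    unfolding measurable_cong_sets[OF sets refl] by measurable
  have "(\<lambda>z::real\<times>real. iexp (t * (fst z + snd z))) \<in> borel_measurable (A \<Otimes>\<^sub>M B)"
    unfolding measurable_cong_sets[OF sets refl] by measurable
  then have int: "integrable (A \<Otimes>\<^sub>M B) (\<lambda>z::real\<times>real. iexp (t * (fst z + snd z)))"
    by (intro AB.integrable_const_bound[where B=1] AE_I2) (simp_all del: of_real_mult)
  have "char (A \<star> B) t = (\<integral>z. iexp (t * (fst z + snd z)) \<partial>(A \<Otimes>\<^sub>M B))"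
    unfolding char_def convolution_def
    by (subst integral_distr[OF add_meas]) (auto simp: case_prod_beta')
  also have "\<dots> = (\<integral>x. (\<integral>y. iexp (t * (x + y)) \<partial>B) \<partial>A)"
    using AB.integral_fst'[OF int] by simp
  also have "\<dots> = (\<integral>x. iexp (t * x) * char B t \<partial>A)"
    unfolding char_def
    by (intro Bochner_Integration.integral_cong refl)
       (simp add: distrib_left exp_add algebra_simps del: of_real_mult)
  finally show ?thesis unfolding char_def by simp
qed

lemma T_op_eq_S_pos_convolution:
  assumes p: "halfline_pdf p"
  shows "T_op p x = enn2real (\<integral>\<^sup>+y. ennreal (S_pos p (x - y)) * ennreal (S_pos p y) \<partial>lborel)"
proof -
  have [measurable]: "p \<in> borel_measurable borel" and nn: "\<And>x. 0 \<le> p x"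
    using halfline_pdfD[OF p] by auto
  have "T_op p x = (\<integral>v. indicator {0..x} v * (S_op p (x - v) * S_op p v) \<partial>lborel)"
    unfolding T_op_def set_lebesgue_integral_def by simp
  also have "\<dots> = (\<integral>v. S_pos p (x - v) * S_pos p v \<partial>lborel)"
  proof (intro integral_cong_AE)
    have "AE v in lborel. v \<noteq> 0" "AE v in lborel. v \<noteq> x" by (rule AE_lborel_singleton)+
    then show "AE v in lborel. indicator {0..x} v * (S_op p (x - v) * S_op p v)
                 = S_pos p (x - v) * S_pos p v"
      by eventually_elim (auto simp: S_pos_def indicator_def)
  qed measurable
  also have "\<dots> = enn2real (\<integral>\<^sup>+y. ennreal (S_pos p (x - y) * S_pos p y) \<partial>lborel)"
    by (rule integral_eq_nn_integral) (auto simp: S_pos_nonneg nn)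
  finally show ?thesis by (simp add: ennreal_mult S_pos_nonneg nn)
qed

lemma
  assumes p: "halfline_pdf p"
  shows halfline_pdf_T_op: "halfline_pdf (T_op p)"
    and law_T_op_eq_convolution: "law (T_op p) = (law (S_pos p) \<star> law (S_pos p))"
proof -
  have [measurable]: "p \<in> borel_measurable borel" using halfline_pdfD[OF p] by auto
  have pS: "halfline_pdf (S_pos p)" by (rule halfline_pdf_S_pos[OF p])
  interpret S: real_distribution "law (S_pos p)" by (rule real_distribution_law[OF pS])
  interpret SS: pair_prob_space "law (S_pos p)" "law (S_pos p)" ..
  define c where "c x = (\<integral>\<^sup>+y. ennreal (S_pos p (x - y)) * ennreal (S_pos p y) \<partial>lborel)" for x
  have [measurable]: "c \<in> borel_measurable borel" unfolding c_def by measurable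
  have "finite_measure (law (S_pos p))" by (rule finite_measureI) (simp add: S.emeasure_space_1)
  then have conv: "(law (S_pos p) \<star> law (S_pos p)) = density lborel c"
    unfolding c_def by (intro convolution_density) simp_all
  have sets: "sets (law (S_pos p) \<Otimes>\<^sub>M law (S_pos p)) = sets (borel \<Otimes>\<^sub>M borel)"
    by (intro sets_pair_measure_cong) auto
  have "(\<lambda>(x,y). x + y :: real) \<in> measurable (law (S_pos p) \<Otimes>\<^sub>M law (S_pos p)) borel"
    unfolding measurable_cong_sets[OF sets refl] by measurable
  then have "prob_space (law (S_pos p) \<star> law (S_pos p))"
    unfolding convolution_def by (rule SS.prob_space_distr)
  then have prob_c: "prob_space (density lborel c)" using conv by simp
  then have "(\<integral>\<^sup>+x. c x \<partial>lborel) = 1"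
    using prob_space.emeasure_space_1[OF prob_c] by (simp add: emeasure_density)
  then have "AE x in lborel. c x \<noteq> \<infinity>" by (intro nn_integral_PInf_AE) auto
  moreover have T_eq: "T_op p = (\<lambda>x. enn2real (c x))"
    using T_op_eq_S_pos_convolution[OF p] by (auto simp: c_def)
  ultimately have law_T: "law (T_op p) = density lborel c"
    by (intro density_cong) (auto elim!: eventually_mono simp: ennreal_enn2real_if)
  then show "law (T_op p) = (law (S_pos p) \<star> law (S_pos p))" using conv by simp
  have "T_op p x = 0" if "x < 0" for x
    using that unfolding T_op_def set_lebesgue_integral_def by simp
  then show "halfline_pdf (T_op p)"
    unfolding halfline_pdf_def using law_T prob_c by (simp add: T_eq)
qed

lemma char_law_T_op:
  assumes "halfline_pdf p"
  shows "char (law (T_op p)) t = (char (law (S_pos p)) t)\<^sup>2"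
  using real_distribution_law[OF halfline_pdf_S_pos[OF assms]]
  by (simp add: law_T_op_eq_convolution[OF assms] char_convolution power2_eq_square)

lemma halfline_pdf_T_op_iterate: "halfline_pdf p \<Longrightarrow> halfline_pdf ((T_op ^^ n) p)"
  by (induction n) (auto intro: halfline_pdf_T_op)

text \<open>\<open>erlang_density k\<close> has shape \<open>k + 1\<close>: \<open>erlang_density 1 (2/w)\<close> is the limit density \<open>p\<^sub>w\<close>.\<close>
lemma halfline_pdf_erlang_1:
  assumes l: "0 < l"
  shows "halfline_pdf (erlang_density 1 l)"
  unfolding halfline_pdf_def
proof (intro conjI allI impI)
  show "prob_space (law (erlang_density 1 l))" by (rule prob_space_erlang_density[OF l])
qed (use l in \<open>auto simp: erlang_density_def\<close>)

lemma S_op_erlang_1: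
  assumes l: "0 < l" and x: "0 < x"
  shows "S_op (erlang_density 1 l) x = exponential_density l x"
proof -
  interpret E: prob_space "law (exponential_density l)"
    using prob_space_exponential_density[OF l] by simp
  have "emeasure (law (exponential_density l)) {..x} = ennreal (1 - exp (- l * x))"
    using emeasure_erlang_density[OF l, of 0 x] x by (simp add: erlang_CDF_0)
  moreover have "emeasure (law (exponential_density l)) {..x}
      + emeasure (law (exponential_density l)) {x<..} = 1"
  proof -
    have "{..x} \<union> {x<..} = UNIV" "{..x} \<inter> {x<..} = {}" by auto
    then show ?thesis
      using plus_emeasure[of "{..x}" "law (exponential_density l)" "{x<..}"] E.emeasure_space_1
      by simp
  qed
  moreover have "ennreal (1 - exp (- l * x)) + ennreal (exp (- l * x)) = 1"
    using l x by (subst ennreal_plus[symmetric]) auto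
  ultimately have "ennreal (1 - exp (- l * x)) + emeasure (law (exponential_density l)) {x<..}
      = ennreal (1 - exp (- l * x)) + ennreal (exp (- l * x))"
    by simp
  then have tail: "emeasure (law (exponential_density l)) {x<..} = ennreal (exp (- l * x))"
    unfolding ennreal_add_left_cancel by simp
  have "ennreal (S_op (erlang_density 1 l) x)
      = (\<integral>\<^sup>+u. ennreal (if x < u then erlang_density 1 l u / u else 0) \<partial>lborel)"
    by (rule ennreal_S_op_eq_nn_integral[OF halfline_pdf_erlang_1[OF l] x])
  also have "\<dots> = (\<integral>\<^sup>+u. ennreal l * (ennreal (exponential_density l u) * indicator {x<..} u)
                    \<partial>lborel)"
  proof (intro nn_integral_cong)
    fix u :: real
    have "erlang_density 1 l u / u = l * exponential_density l u" if "0 < u"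
      using that by (simp add: erlang_density_def exponential_density_def power2_eq_square)
    then show "ennreal (if x < u then erlang_density 1 l u / u else 0)
        = ennreal l * (ennreal (exponential_density l u) * indicator {x<..} u)"
      using l x by (auto simp: ennreal_mult[symmetric] exponential_density_def)
  qed
  also have "\<dots> = ennreal l * emeasure (law (exponential_density l)) {x<..}"
    by (subst nn_integral_cmult) (auto simp: emeasure_density)
  also have "\<dots> = ennreal (exponential_density l x)"
    using tail l x by (simp add: ennreal_mult[symmetric] exponential_density_def mult.commute)
  finally show ?thesis
    using S_op_nonneg[of "erlang_density 1 l" x] l x by (simp add: exponential_density_def)
qed

lemma law_S_pos_erlang_1:
  assumes l: "0 < l"
  shows "law (S_pos (erlang_density 1 l)) = law (exponential_density l)"
proof (intro density_cong)
  show "AE x in lborel. ennreal (S_pos (erlang_density 1 l) x) = ennreal (exponential_density l x)"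
    using AE_lborel_singleton[of 0]
  proof eventually_elim
    fix x :: real assume "x \<noteq> 0"
    then show "ennreal (S_pos (erlang_density 1 l) x) = ennreal (exponential_density l x)"
      using S_op_erlang_1[OF l, of x] by (cases "0 < x") (auto simp: S_pos_def exponential_density_def)
  qed
qed measurable

lemma law_T_op_erlang_1:
  assumes l: "0 < l"
  shows "law (T_op (erlang_density 1 l)) = law (erlang_density 1 l)"
proof -
  interpret E: prob_space "law (exponential_density l)"
    using prob_space_exponential_density[OF l] by simp
  have "finite_measure (law (exponential_density l))"
    by (rule finite_measureI) (simp add: E.emeasure_space_1)
  have "law (T_op (erlang_density 1 l)) = (law (exponential_density l) \<star> law (exponential_density l))"
    by (simp only: law_T_op_eq_convolution[OF halfline_pdf_erlang_1[OF l]] law_S_pos_erlang_1[OF l])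
  also have "\<dots> =
      density lborel (\<lambda>x. \<integral>\<^sup>+y. ennreal (exponential_density l (x - y))
                                  * ennreal (exponential_density l y) \<partial>lborel)"
    by (intro convolution_density) (simp_all add: \<open>finite_measure (law (exponential_density l))\<close>)
  also have "\<dots> = law (erlang_density 1 l)"
    using convolution_erlang_density[OF l, of 0 0] by simp
  finally show ?thesis .
qed

lemma min_le_powr:
  fixes y b :: real
  assumes y: "0 \<le> y" and b: "1 \<le> b" "b \<le> 2"
  shows "min (2 * y) (y\<^sup>2 / 2) \<le> 2 * y powr b"
proof (cases "y \<le> 1")
  case True
  have "y\<^sup>2 \<le> y powr b"
  proof (cases "y = 0")
    case False
    then show ?thesis using powr_mono'[of b 2 y] b y True by simp
  qed (use b in simp)
  then have "y\<^sup>2 / 2 \<le> 2 * y powr b" using powr_ge_zero[of y b] by linarith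
  then show ?thesis by (rule order_trans[OF min.cobounded2])
next
  case False
  then have "y \<le> y powr b" using powr_mono[of 1 b y] b by simp
  then show ?thesis by (simp add: min_le_iff_disj)
qed

lemma (in real_distribution) char_first_order_approx:
  assumes "integrable M (\<lambda>x. x)" and "integrable M (\<lambda>x. \<bar>x\<bar> powr b)" and "1 \<le> b" "b \<le> 2"
  shows "cmod (char M t - (1 + \<i> * t * expectation (\<lambda>x. x)))
           \<le> 2 * \<bar>t\<bar> powr b * expectation (\<lambda>x. \<bar>x\<bar> powr b)"
proof -
  define m where "m x = min (2 * \<bar>x\<bar>^Suc 0 * Suc (Suc 0)) (\<bar>t\<bar> * \<bar>x\<bar>^Suc (Suc 0))" for x :: real
  have "integrable M (\<lambda>x. x ^ k)" if "k \<le> Suc 0" for k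
    using that assms(1) by (cases k) auto
  then have "cmod (char M t - (\<Sum>k \<le> Suc 0. ((\<i> * t)^k / fact k) * expectation (\<lambda>x. x^k)))
      \<le> (\<bar>t\<bar>^Suc 0 / fact (Suc (Suc 0))) * expectation m"
    unfolding m_def by (rule char_approx2)
  moreover have "(\<Sum>k \<le> Suc 0. ((\<i> * t)^k / fact k) * expectation (\<lambda>x. x^k))
      = 1 + \<i> * t * expectation (\<lambda>x. x)"
    using prob_space by (simp del: space_eq_univ)
  moreover have "\<bar>t\<bar> / 2 * m x \<le> 2 * \<bar>t\<bar> powr b * \<bar>x\<bar> powr b" for x
  proof -
    have "\<bar>t\<bar> / 2 * m x = min (2 * (\<bar>t\<bar> * \<bar>x\<bar>)) ((\<bar>t\<bar> * \<bar>x\<bar>)\<^sup>2 / 2)"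
      unfolding m_def by (simp add: mult_min_right power2_eq_square field_simps)
    also have "\<dots> \<le> 2 * (\<bar>t\<bar> * \<bar>x\<bar>) powr b" by (rule min_le_powr) (use assms in auto)
    finally show ?thesis by (simp add: powr_mult)
  qed
  moreover have "integrable M (\<lambda>x. \<bar>t\<bar> / 2 * m x)"
  proof (rule Bochner_Integration.integrable_bound)
    show "integrable M (\<lambda>x. 2 * \<bar>t\<bar> * \<bar>x\<bar>)"
      using assms(1) by (intro integrable_mult_right integrable_abs)
    have "\<bar>t\<bar> * m x \<le> 4 * (\<bar>t\<bar> * \<bar>x\<bar>)" "0 \<le> m x" for x
      using mult_left_mono[of "m x" "4 * \<bar>x\<bar>" "\<bar>t\<bar>"] unfolding m_def by auto
    then show "AE x in M. norm (\<bar>t\<bar> / 2 * m x) \<le> norm (2 * \<bar>t\<bar> * \<bar>x\<bar>)"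
      by (intro AE_I2) (simp add: abs_mult)
  qed (simp add: m_def)
  ultimately show ?thesis
    using integral_mono[of M "\<lambda>x. \<bar>t\<bar> / 2 * m x" "\<lambda>x. 2 * \<bar>t\<bar> powr b * \<bar>x\<bar> powr b"] assms(2)
    by (simp add: field_simps)
qed

lemma char_dist_le_of_same_mean:
  assumes M: "real_distribution M" and N: "real_distribution N"
    and "integrable M (\<lambda>x. x)" "integrable N (\<lambda>x. x)" "(\<integral>x. x \<partial>M) = (\<integral>x. x \<partial>N)"
    and "integrable M (\<lambda>x. \<bar>x\<bar> powr b)" "integrable N (\<lambda>x. \<bar>x\<bar> powr b)" and "1 \<le> b" "b \<le> 2"
  shows "cmod (char M t - char N t)
           \<le> 2 * ((\<integral>x. \<bar>x\<bar> powr b \<partial>M) + (\<integral>x. \<bar>x\<bar> powr b \<partial>N)) * \<bar>t\<bar> powr b"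
proof -
  define c where "c = 1 + \<i> * t * (\<integral>x. x \<partial>M)"
  have "cmod (char M t - char N t) \<le> cmod (char M t - c) + cmod (char N t - c)"
    using norm_triangle_ineq4[of "char M t - c" "char N t - c"] by simp
  also have "\<dots> \<le> 2 * \<bar>t\<bar> powr b * (\<integral>x. \<bar>x\<bar> powr b \<partial>M) + 2 * \<bar>t\<bar> powr b * (\<integral>x. \<bar>x\<bar> powr b \<partial>N)"
    using real_distribution.char_first_order_approx[OF M, of b t]
      real_distribution.char_first_order_approx[OF N, of b t] assms
    by (intro add_mono) (simp_all add: c_def)
  finally show ?thesis by (simp add: algebra_simps)
qed

text \<open>Averaging \<open>K |t v|\<^sup>b\<close> over \<open>v \<in> [0,1]\<close> gains the factor \<open>1/(b+1)\<close>; squaring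
  costs at most the factor \<open>|\<phi> + \<psi>| \<le> 2\<close>.\<close>
lemma char_S_pos_sq_dist_le:
  assumes p: "halfline_pdf p" and q: "halfline_pdf q"
    and bound: "\<And>s. cmod (char (law p) s - char (law q) s) \<le> K * \<bar>s\<bar> powr b" and b: "0 \<le> b"
  shows "cmod ((char (law (S_pos p)) t)\<^sup>2 - (char (law (S_pos q)) t)\<^sup>2) \<le> 2 * K / (b + 1) * \<bar>t\<bar> powr b"
proof -
  interpret Dp: real_distribution "law p" using real_distribution_law[OF p] .
  interpret Dq: real_distribution "law q" using real_distribution_law[OF q] .
  interpret Sp: real_distribution "law (S_pos p)" using real_distribution_law[OF halfline_pdf_S_pos[OF p]] .
  interpret Sq: real_distribution "law (S_pos q)" using real_distribution_law[OF halfline_pdf_S_pos[OF q]] .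
  interpret UU: prob_space unif01 by (rule prob_space_unif01)
  note [measurable] = Dp.char_measurable Dq.char_measurable
  define A where "A = char (law (S_pos p)) t"
  define B where "B = char (law (S_pos q)) t"
  have ip: "integrable unif01 (\<lambda>v. char (law p) (t * v))"
    by (intro UU.integrable_const_bound[where B=1] AE_I2 Dp.cmod_char_le_1)
       (simp add: measurable_cong_sets[OF sets_unif01 refl])
  have iq: "integrable unif01 (\<lambda>v. char (law q) (t * v))"
    by (intro UU.integrable_const_bound[where B=1] AE_I2 Dq.cmod_char_le_1)
       (simp add: measurable_cong_sets[OF sets_unif01 refl])
  have "A - B = (\<integral>v. char (law p) (t * v) - char (law q) (t * v) \<partial>unif01)"
    unfolding A_def B_def char_law_S_pos[OF p] char_law_S_pos[OF q]
    by (rule Bochner_Integration.integral_diff[OF ip iq, symmetric])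
  also have "cmod \<dots> \<le> (\<integral>v. K * \<bar>t\<bar> powr b * \<bar>v\<bar> powr b \<partial>unif01)"
  proof (rule Bochner_Integration.integral_norm_bound_integral)
    show "integrable unif01 (\<lambda>v. K * \<bar>t\<bar> powr b * \<bar>v\<bar> powr b)"
      using unif01_abs_powr_moment(1)[OF b] by simp
    show "cmod (char (law p) (t * v) - char (law q) (t * v)) \<le> K * \<bar>t\<bar> powr b * \<bar>v\<bar> powr b" for v
      using bound[of "t * v"] by (simp add: abs_mult powr_mult mult.assoc)
  qed (use ip iq in simp)
  also have "\<dots> = K * \<bar>t\<bar> powr b / (b + 1)" using unif01_abs_powr_moment(2)[OF b] by simp
  finally have diff: "cmod (A - B) \<le> K * \<bar>t\<bar> powr b / (b + 1)" .
  have sum: "cmod (A + B) \<le> 2"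
    using norm_triangle_ineq[of A B] Sp.cmod_char_le_1[of t] Sq.cmod_char_le_1[of t]
    unfolding A_def B_def by simp
  have "cmod (A\<^sup>2 - B\<^sup>2) = cmod (A - B) * cmod (A + B)"
    by (simp add: power2_eq_square norm_mult[symmetric] algebra_simps)
  also have "\<dots> \<le> K * \<bar>t\<bar> powr b / (b + 1) * 2"
    using diff sum by (intro mult_mono) (auto intro: order_trans[OF norm_ge_zero])
  also have "\<dots> = 2 * K / (b + 1) * \<bar>t\<bar> powr b" by simp
  finally show ?thesis unfolding A_def B_def .
qed

lemma char_T_op_iterate_dist_le:
  assumes p: "halfline_pdf p" and q: "halfline_pdf q" and fixed: "law (T_op q) = law q"
    and base: "\<And>s. cmod (char (law p) s - char (law q) s) \<le> C * \<bar>s\<bar> powr b" and b: "0 \<le> b"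
  shows "cmod (char (law ((T_op ^^ n) p)) s - char (law q) s) \<le> C * (2 / (b + 1)) ^ n * \<bar>s\<bar> powr b"
proof (induction n arbitrary: s)
  case 0
  then show ?case using base by simp
next
  case (Suc n)
  have "char (law q) s = (char (law (S_pos q)) s)\<^sup>2"
    using char_law_T_op[OF q] fixed by metis
  then have "cmod (char (law ((T_op ^^ Suc n) p)) s - char (law q) s)
      = cmod ((char (law (S_pos ((T_op ^^ n) p))) s)\<^sup>2 - (char (law (S_pos q)) s)\<^sup>2)"
    by (simp add: char_law_T_op[OF halfline_pdf_T_op_iterate[OF p]])
  also have "\<dots> \<le> 2 * (C * (2 / (b + 1)) ^ n) / (b + 1) * \<bar>s\<bar> powr b"
    by (rule char_S_pos_sq_dist_le[OF halfline_pdf_T_op_iterate[OF p] q Suc.IH b])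
  finally show ?case by (simp add: mult_ac)
qed

lemma powr_le_1_plus:
  fixes x :: real
  assumes "0 \<le> x" "0 \<le> b" "b \<le> a"
  shows "x powr b \<le> 1 + x powr a"
proof (cases "x \<le> 1")
  case True
  then have "x powr b \<le> 1" using assms by (intro powr_le1) auto
  then show ?thesis by (smt (verit) powr_ge_zero)
next
  case False
  then have "x powr b \<le> x powr a" using assms by (intro powr_mono) auto
  then show ?thesis by simp
qed

lemma integrable_halfline_pdf: "halfline_pdf p \<Longrightarrow> integrable lborel p"
  using nn_integral_halfline_pdf[of p] halfline_pdfD[of p]
  by (intro integrableI_nn_integral_finite[where x=1]) auto

lemma integrable_law_abs_powr:
  assumes p: "halfline_pdf p" and moment: "integrable lborel (\<lambda>y. p y * y powr a)"
    and "0 \<le> b" "b \<le> a"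
  shows "integrable (law p) (\<lambda>y. \<bar>y\<bar> powr b)"
proof -
  have [measurable]: "p \<in> borel_measurable borel" and nn: "\<And>y. 0 \<le> p y"
    and neg: "\<And>y. y < 0 \<Longrightarrow> p y = 0"
    using halfline_pdfD[OF p] by auto
  have "integrable lborel (\<lambda>y. p y * \<bar>y\<bar> powr b)"
  proof (rule Bochner_Integration.integrable_bound)
    show "integrable lborel (\<lambda>y. p y + p y * y powr a)"
      using integrable_halfline_pdf[OF p] moment by simp
    have "norm (p y * \<bar>y\<bar> powr b) \<le> norm (p y + p y * y powr a)" for y
    proof -
      have "p y * \<bar>y\<bar> powr b \<le> p y + p y * y powr a"
      proof (cases "0 \<le> y")
        case True
        then show ?thesis
          using mult_left_mono[OF powr_le_1_plus[of y b a] nn[of y]] assms(3,4)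
          by (simp add: algebra_simps)
      qed (simp add: neg)
      moreover have "0 \<le> p y * \<bar>y\<bar> powr b" by (simp add: nn)
      ultimately show ?thesis by simp
    qed
    then show "AE y in lborel. norm (p y * \<bar>y\<bar> powr b) \<le> norm (p y + p y * y powr a)"
      by simp
  qed measurable
  then show ?thesis by (simp add: integrable_law_iff[OF p])
qed

lemma mean_pos:
  assumes p: "halfline_pdf p" and "integrable (law p) (\<lambda>y. y)" and "(\<integral>y. y \<partial>law p) = w"
  shows "0 < w"
proof -
  have [measurable]: "p \<in> borel_measurable borel" and nn: "\<And>y. 0 \<le> p y"
    and neg: "\<And>y. y < 0 \<Longrightarrow> p y = 0"
    using halfline_pdfD[OF p] by auto
  have int: "integrable lborel (\<lambda>y. p y * y)" and w: "(\<integral>y. p y * y \<partial>lborel) = w"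
    using assms by (simp_all add: integrable_law_iff[OF p] integral_law[OF p])
  have ae_nonneg: "AE y in lborel. 0 \<le> p y * y"
    using nn neg by (intro AE_I2) (metis mult_nonneg_nonneg not_le mult_zero_left)
  then have "0 \<le> w" unfolding w[symmetric] by (rule integral_nonneg_AE)
  moreover have "w \<noteq> 0"
  proof
    assume "w = 0"
    then have "AE y in lborel. p y * y = 0"
      using integral_nonneg_eq_0_iff_AE[OF int ae_nonneg] w by simp
    then have "AE y in lborel. p y = 0"
      using AE_lborel_singleton[of 0] by eventually_elim auto
    then have "AE y in lborel. ennreal (p y) = 0" by (auto elim: eventually_mono)
    then have "(\<integral>\<^sup>+y. ennreal (p y) \<partial>lborel) = (\<integral>\<^sup>+y. 0 \<partial>(lborel :: real measure))"
      by (rule nn_integral_cong_AE)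
    then show False using nn_integral_halfline_pdf[OF p] by simp
  qed
  ultimately show ?thesis by simp
qed

lemma erlang_1_mean:
  assumes l: "0 < l"
  shows "integrable (law (erlang_density 1 l)) (\<lambda>y. y)"
    and "(\<integral>y. y \<partial>law (erlang_density 1 l)) = 2 / l"
proof -
  have "has_bochner_integral lborel (\<lambda>y. erlang_density 1 l y * y) (2 / l)"
  proof (rule has_bochner_integral_nn_integral)
    show "(\<integral>\<^sup>+y. ennreal (erlang_density 1 l y * y) \<partial>lborel) = ennreal (2 / l)"
      using nn_integral_erlang_ith_moment[OF l, of 1 1] by simp
  qed (use l in \<open>auto intro!: AE_I2 simp: erlang_density_def\<close>)
  then show "integrable (law (erlang_density 1 l)) (\<lambda>y. y)"
    and "(\<integral>y. y \<partial>law (erlang_density 1 l)) = 2 / l"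
    using integrable_law_iff[OF halfline_pdf_erlang_1[OF l], of "\<lambda>y. y"]
      integral_law[OF halfline_pdf_erlang_1[OF l], of "\<lambda>y. y"]
    by (auto intro: integrable.intros dest: has_bochner_integral_integral_eq)
qed

lemma integrable_erlang_1_powr_2:
  assumes l: "0 < l"
  shows "integrable lborel (\<lambda>y. erlang_density 1 l y * y powr 2)"
proof (rule integrableI_nn_integral_finite)
  show "(\<integral>\<^sup>+y. ennreal (erlang_density 1 l y * y powr 2) \<partial>lborel) = ennreal (6 / l\<^sup>2)"
    using nn_integral_erlang_ith_moment[OF l, of 1 2]
    by (subst nn_integral_cong[where v="\<lambda>y. ennreal (erlang_density 1 l y * y ^ 2)"])
       (auto simp: erlang_density_def fact_numeral)
qed (use l in \<open>auto intro!: AE_I2 simp: erlang_density_def\<close>)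

lemma cdf_T_op_iterate_tendsto_erlang:
  assumes p: "halfline_pdf p"
    and mean: "integrable (law p) (\<lambda>y. y)" "(\<integral>y. y \<partial>law p) = w"
    and moment: "integrable (law p) (\<lambda>y. \<bar>y\<bar> powr b)" and b: "1 < b" "b \<le> 2"
  shows "(\<lambda>n. cdf (law ((T_op ^^ n) p)) x) \<longlonglongrightarrow> cdf (law (erlang_density 1 (2 / w))) x"
proof -
  define l where "l = 2 / w"
  have l: "0 < l" using mean_pos[OF p mean] by (simp add: l_def)
  define q where "q = erlang_density 1 l"
  have q: "halfline_pdf q" unfolding q_def by (rule halfline_pdf_erlang_1[OF l])
  have q_mean: "integrable (law q) (\<lambda>y. y)" "(\<integral>y. y \<partial>law q) = w"
    using erlang_1_mean[OF l] mean_pos[OF p mean] by (simp_all add: q_def l_def)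
  have q_moment: "integrable (law q) (\<lambda>y. \<bar>y\<bar> powr b)"
    using integrable_law_abs_powr[OF q _ _ b(2)] integrable_erlang_1_powr_2[OF l] b
    by (simp add: q_def)
  define C where "C = 2 * ((\<integral>y. \<bar>y\<bar> powr b \<partial>law p) + (\<integral>y. \<bar>y\<bar> powr b \<partial>law q))"
  have base: "cmod (char (law p) s - char (law q) s) \<le> C * \<bar>s\<bar> powr b" for s
    unfolding C_def
    using b mean q_mean moment q_moment
    by (intro char_dist_le_of_same_mean real_distribution_law p q) simp_all
  have fixed: "law (T_op q) = law q" unfolding q_def by (rule law_T_op_erlang_1[OF l])
  have bound: "cmod (char (law ((T_op ^^ n) p)) s - char (law q) s) \<le> C * (2 / (b + 1)) ^ n * \<bar>s\<bar> powr b"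
    for n s
    using b by (intro char_T_op_iterate_dist_le[OF p q fixed base]) simp
  have "(\<lambda>n. char (law ((T_op ^^ n) p)) s) \<longlonglongrightarrow> char (law q) s" for s
  proof (rule LIM_zero_cancel, rule Lim_null_comparison)
    show "\<forall>\<^sub>F n in sequentially. norm (char (law ((T_op ^^ n) p)) s - char (law q) s)
            \<le> C * (2 / (b + 1)) ^ n * \<bar>s\<bar> powr b"
      using bound by simp
    have "(\<lambda>n. C * (2 / (b + 1)) ^ n * \<bar>s\<bar> powr b) \<longlonglongrightarrow> C * 0 * \<bar>s\<bar> powr b"
      using b by (intro tendsto_intros) simp
    then show "(\<lambda>n. C * (2 / (b + 1)) ^ n * \<bar>s\<bar> powr b) \<longlonglongrightarrow> 0" by simp
  qed
  then have "weak_conv_m (\<lambda>n. law ((T_op ^^ n) p)) (law q)"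
    by (rule levy_continuity[OF real_distribution_law[OF halfline_pdf_T_op_iterate[OF p]]
          real_distribution_law[OF q]])
  then have "(\<lambda>n. cdf (law ((T_op ^^ n) p)) x) \<longlonglongrightarrow> cdf (law q) x"
    using isCont_cdf_law[OF q] unfolding weak_conv_m_def weak_conv_def by blast
  then show ?thesis unfolding q_def l_def .
qed

lemma cdf_law_erlang_1:
  assumes "0 < l"
  shows "cdf (law (erlang_density 1 l)) x = (LBINT u:{0..x}. l\<^sup>2 * u * exp (- l * u))"
  unfolding cdf_law[OF halfline_pdf_erlang_1[OF assms]]
  by (intro set_lebesgue_integral_cong) (auto simp: erlang_density_def power2_eq_square)

text \<open>The hypotheses constrain \<open>p\<^sub>0\<close> only on \<open>[0,\<infinity>)\<close>, but \<open>T\<close> reads its argument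
  only on \<open>(0,\<infinity>)\<close>, so \<open>p\<^sub>0\<close> may be replaced by a density vanishing on \<open>(-\<infinity>,0]\<close>.\<close>
definition restrict_pos :: "(real \<Rightarrow> real) \<Rightarrow> real \<Rightarrow> real" where
  "restrict_pos p x = (if 0 < x then p x else 0)"

lemma restrict_pos_moment:
  assumes "set_integrable lborel {0..} (\<lambda>x. f x * p x)"
  shows "integrable lborel (\<lambda>x. restrict_pos p x * f x)"
    and "(\<integral>x. restrict_pos p x * f x \<partial>lborel) = (LBINT x:{0..}. f x * p x)"
proof -
  have eq: "(\<lambda>x. restrict_pos p x * f x) = (\<lambda>x. indicator {0<..} x *\<^sub>R (indicator {0..} x *\<^sub>R (f x * p x)))"
    by (auto simp: restrict_pos_def fun_eq_iff indicator_def)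
  show int: "integrable lborel (\<lambda>x. restrict_pos p x * f x)"
    unfolding eq by (rule integrable_mult_indicator) (use assms in \<open>simp_all add: set_integrable_def\<close>)
  show "(\<integral>x. restrict_pos p x * f x \<partial>lborel) = (LBINT x:{0..}. f x * p x)"
    unfolding set_lebesgue_integral_def
  proof (intro integral_cong_AE)
    show "AE x in lborel. restrict_pos p x * f x = indicator {0..} x *\<^sub>R (f x * p x)"
      using AE_lborel_singleton[of 0] by eventually_elim (auto simp: restrict_pos_def indicator_def)
  qed (use int assms in \<open>auto simp: set_integrable_def\<close>)
qed

lemma T_op_restrict_pos: "T_op (restrict_pos p) = T_op p"
  by (rule T_op_cong) (simp add: restrict_pos_def)

lemma halfline_pdf_restrict_pos:
  assumes nonneg: "\<And>x. 0 \<le> x \<Longrightarrow> 0 \<le> p x"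
    and int: "set_integrable lborel {0..} p" and mass: "(LBINT x:{0..}. p x) = 1"
  shows "halfline_pdf (restrict_pos p)"
proof -
  have int: "integrable lborel (restrict_pos p)" "(\<integral>x. restrict_pos p x \<partial>lborel) = 1"
    using restrict_pos_moment[of "\<lambda>_. 1" p] int mass by simp_all
  have [measurable]: "restrict_pos p \<in> borel_measurable borel"
    using borel_measurable_integrable[OF int(1)] by simp
  have nn: "0 \<le> restrict_pos p x" for x by (simp add: restrict_pos_def nonneg)
  have "(\<integral>\<^sup>+x. ennreal (restrict_pos p x) \<partial>lborel) = 1"
    using int by (simp add: nn_integral_eq_integral nn)
  then have "prob_space (law (restrict_pos p))" by (intro prob_spaceI) (simp add: emeasure_density)
  then show ?thesis unfolding halfline_pdf_def by (simp add: nn nonneg restrict_pos_def[of p])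
qed

theorem theorem2:
  fixes p0 :: "real \<Rightarrow> real" and w \<alpha> :: real
  assumes nonneg: "\<And>x. x \<ge> 0 \<Longrightarrow> p0 x \<ge> 0"
    and int_p0: "set_integrable lborel {0..} p0"
    and mass: "(LBINT x:{0..}. p0 x) = 1"
    and int_mean: "set_integrable lborel {0..} (\<lambda>x. x * p0 x)"
    and mean: "(LBINT x:{0..}. x * p0 x) = w"
    and alpha: "\<alpha> > 1"
    and moment: "set_integrable lborel {0..} (\<lambda>x. x powr \<alpha> * p0 x)"
  shows "\<forall>x\<ge>0. (\<lambda>t. LBINT u:{0..x}. (T_op ^^ t) p0 u)
           \<longlonglongrightarrow> (LBINT u:{0..x}. 4 / w\<^sup>2 * u * exp (- (2 / w) * u))"
proof (intro allI impI)
  fix x :: real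
  define q where "q = restrict_pos p0"
  have q: "halfline_pdf q" unfolding q_def by (rule halfline_pdf_restrict_pos[OF nonneg int_p0 mass])
  have "integrable lborel (\<lambda>y. q y * y)" "(\<integral>y. q y * y \<partial>lborel) = w"
    using restrict_pos_moment[OF int_mean] mean by (simp_all add: q_def)
  then have q_mean: "integrable (law q) (\<lambda>y. y)" "(\<integral>y. y \<partial>law q) = w"
    by (simp_all only: integrable_law_iff[OF q measurable_ident_sets[OF refl]]
        integral_law[OF q measurable_ident_sets[OF refl]])
  have q_moment: "integrable (law q) (\<lambda>y. \<bar>y\<bar> powr min \<alpha> 2)"
    using restrict_pos_moment(1)[OF moment] alpha
    by (intro integrable_law_abs_powr[OF q, of \<alpha>]) (simp_all add: q_def)
  have lim: "(\<lambda>n. cdf (law ((T_op ^^ n) q)) x) \<longlonglongrightarrow> cdf (law (erlang_density 1 (2 / w))) x"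
    by (rule cdf_T_op_iterate_tendsto_erlang[OF q q_mean q_moment]) (use alpha in auto)
  have "(T_op ^^ Suc n) q = (T_op ^^ Suc n) p0" for n
    by (simp add: funpow_Suc_right q_def T_op_restrict_pos del: funpow.simps)
  then have iterate: "(LBINT u:{0..x}. (T_op ^^ Suc n) p0 u) = cdf (law ((T_op ^^ Suc n) q)) x" for n
    by (metis cdf_law halfline_pdf_T_op_iterate[OF q])
  have limit: "cdf (law (erlang_density 1 (2 / w))) x
      = (LBINT u:{0..x}. 4 / w\<^sup>2 * u * exp (- (2 / w) * u))"
    using cdf_law_erlang_1[of "2 / w" x] mean_pos[OF q q_mean] by (simp add: power_divide)
  show "(\<lambda>t. LBINT u:{0..x}. (T_op ^^ t) p0 u)
      \<longlonglongrightarrow> (LBINT u:{0..x}. 4 / w\<^sup>2 * u * exp (- (2 / w) * u))"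
    by (rule LIMSEQ_imp_Suc) (unfold iterate limit[symmetric], rule LIMSEQ_Suc[OF lim])
qed
end
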